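(* Let the communication parameter be an integer $a\ge 2$ and suppose: (i) for every pair of distinct hypotheses $\theta_p,\theta_q\in\Theta$, the source set $\mathcal{S}(\theta_p,\theta_q)$ is non-empty; (ii) the directed graph $\mathcal{G}$ is strongly connected; (iii) $\pi_{i,0}(\theta)>0$ and $\mu_{i,0}(\theta)>0$ for all $i\in\mathcal{V}$ and all $\theta\in\Theta$. Then the learning rule (local Bayesian update plus time-triggered min-protocol, as described in the context) guarantees: (Consistency) for every agent $i\in\mathcal{V}$, $\mu_{i,t}(\theta^\star)\to 1$ almost surely (w.r.t. $\mathbb{P}^{\theta^\star}$); (Rate) for every agent $i\in\mathcal{V}$ and every false hypothesis $\theta\in\Theta\setminus\{\theta^\star\}$, $$\liminf_{t\to\infty}-\frac{\log \mu_{i,t}(\theta)}{t}\ \ge\ \max_{v\in\mathcal{S}(\theta^\star,\theta)}\frac{K_v(\theta^\star,\theta)}{a^{\,d(v,i)+1}}\quad\text{almost surely.}$$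
   Context: Agents $\mathcal{V}=\{1,\dots,n\}$ interact over a directed graph $\mathcal{G}=(\mathcal{V},\mathcal{E})$; an edge $(j,i)\in\mathcal{E}$ means $j$ can send information to $i$, and $\mathcal{N}_i=\{j:(j,i)\in\mathcal{E}\}$ is the set of (in-)neighbors of $i$. For a strongly connected $\mathcal{G}$, $d(i,j)$ is the length of a shortest directed path from $i$ to $j$ ($d(i,i)=0$), and $\bar d(\mathcal{G})=\max_{i,j}d(i,j)$ is the diameter. $\Theta=\{\theta_1,\dots,\theta_m\}$ is a finite set of hypotheses, and $\theta^\star\in\Theta$ is a fixed (unknown) true state. Each agent $i$ has a finite signal space $\mathcal{S}_i$; $\mathcal{S}=\mathcal{S}_1\times\cdots\times\mathcal{S}_n$. For each $\theta\in\Theta$ there is a joint likelihood $l(\cdot|\theta)$ on $\mathcal{S}$ whose $i$-th marginal $l_i(\cdot|\theta)$ is known to agent $i$, with $l_i(w_i|\theta)>0$ for all $w_i\in\mathcal{S}_i,\theta\in\Theta$. At each time $t\in\mathbb{N}_+$ the profile $s_t=(s_{1,t},\dots,s_{n,t})$ is drawn from $l(\cdot|\theta^\star)$, i.i.d. over time (possibly correlated across agents at a given time); agent $i$ observes $s_{i,t}$. The probability space is $\Omega=\{(s_1,s_2,\dots)\}$ with product measure $\mathbb{P}^{\theta^\star}=\prod_{t\ge1}l(\cdot|\theta^\star)$; "a.s." is w.r.t. $\mathbb{P}^{\theta^\star}$. $K_i(\theta_p,\theta_q)=D(l_i(\cdot|\theta_p)\,\|\,l_i(\cdot|\theta_q))$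 is the KL divergence. The source set is $\mathcal{S}(\theta_p,\theta_q)=\{i\in\mathcal{V}:K_i(\theta_p,\theta_q)>0\}$. Learning rule with parameter $a\in\mathbb{N}_+$: each agent keeps probability vectors $\boldsymbol\pi_{i,t}$ (local beliefs) and $\boldsymbol\mu_{i,t}$ (actual beliefs) on $\Theta$, initialized at $\boldsymbol\pi_{i,0},\boldsymbol\mu_{i,0}$. Let $\mathbb{I}=\{t_k\}_{k\in\mathbb{N}_+}$ with $t_1=1$ and $t_{k+1}-t_k=a^k$. For every $t\in\mathbb{N}$: $\pi_{i,t+1}(\theta)=\dfrac{l_i(s_{i,t+1}|\theta)\pi_{i,t}(\theta)}{\sum_{p=1}^m l_i(s_{i,t+1}|\theta_p)\pi_{i,t}(\theta_p)}$; if $t+1\in\mathbb{I}$: $\mu_{i,t+1}(\theta)=\dfrac{\min\{\{\mu_{j,t}(\theta)\}_{j\in\mathcal{N}_i},\pi_{i,t+1}(\theta)\}}{\sum_{p=1}^m\min\{\{\mu_{j,t}(\theta_p)\}_{j\in\mathcal{N}_i},\pi_{i,t+1}(\theta_p)\}}$; if $t+1\notin\mathbb{I}$: $\mu_{i,t+1}(\theta)=\mu_{i,t}(\theta)$. *)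

theory Defs
  imports "HOL-Probability.Probability" "HOL-Probability.Stream_Space"
begin

definition lik :: "('h \<Rightarrow> ('v \<Rightarrow> 's) pmf) \<Rightarrow> 'v \<Rightarrow> 'h \<Rightarrow> 's \<Rightarrow> real" where
  "lik l i th w = pmf (map_pmf (\<lambda>s. s i) (l th)) w"

definition KL :: "('h \<Rightarrow> ('v \<Rightarrow> 's) pmf) \<Rightarrow> ('v \<Rightarrow> 's set) \<Rightarrow> 'v \<Rightarrow> 'h \<Rightarrow> 'h \<Rightarrow> real" where
  "KL l Sig i p q = (\<Sum>w\<in>Sig i. lik l i p w * ln (lik l i p w / lik l i q w))"

definition source_set :: "('h \<Rightarrow> ('v \<Rightarrow> 's) pmf) \<Rightarrow> ('v \<Rightarrow> 's set) \<Rightarrow> 'h \<Rightarrow> 'h \<Rightarrow> 'v set" where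
  "source_set l Sig p q = {i. KL l Sig i p q > 0}"

(* in-neighbours: (j,i) \<in> E means j can send to i *)
definition nbrs :: "('v \<times> 'v) set \<Rightarrow> 'v \<Rightarrow> 'v set" where
  "nbrs E i = {j. (j, i) \<in> E}"

definition strongly_connected :: "('v::finite \<times> 'v) set \<Rightarrow> bool" where
  "strongly_connected E \<longleftrightarrow> (\<forall>i j. (i, j) \<in> E\<^sup>*)"

definition dist_graph :: "('v \<times> 'v) set \<Rightarrow> 'v \<Rightarrow> 'v \<Rightarrow> nat" where
  "dist_graph E i j = (LEAST k. (i, j) \<in> E ^^ k)"

(* triggering times: trig a k = t_{k+1}; t_1 = 1, t_{k+1} - t_k = a^k *)
fun trig :: "nat \<Rightarrow> nat \<Rightarrow> nat" where
  "trig a 0 = 1"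
| "trig a (Suc k) = trig a k + a ^ Suc k"

(* Joint state (local beliefs pi, actual beliefs mu) at time t along the signal path \<omega>;
   the signal profile s_t (t \<ge> 1) is \<omega> !! (t - 1). *)
fun beliefs :: "nat \<Rightarrow> ('v \<times> 'v) set \<Rightarrow> ('h::finite \<Rightarrow> ('v \<Rightarrow> 's) pmf)
    \<Rightarrow> ('v \<Rightarrow> 'h \<Rightarrow> real) \<Rightarrow> ('v \<Rightarrow> 'h \<Rightarrow> real) \<Rightarrow> ('v \<Rightarrow> 's) stream \<Rightarrow> nat
    \<Rightarrow> ('v \<Rightarrow> 'h \<Rightarrow> real) \<times> ('v \<Rightarrow> 'h \<Rightarrow> real)" where
  "beliefs a E l pi0 mu0 \<omega> 0 = (pi0, mu0)"
| "beliefs a E l pi0 mu0 \<omega> (Suc t) =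
     (let pi = fst (beliefs a E l pi0 mu0 \<omega> t);
          mu = snd (beliefs a E l pi0 mu0 \<omega> t);
          s = \<omega> !! t;
          pi' = (\<lambda>i th. lik l i th (s i) * pi i th / (\<Sum>p\<in>UNIV. lik l i p (s i) * pi i p));
          mn = (\<lambda>i th. Min (insert (pi' i th) ((\<lambda>j. mu j th) ` nbrs E i)));
          mu' = (if Suc t \<in> range (trig a)
                 then (\<lambda>i th. mn i th / (\<Sum>p\<in>UNIV. mn i p))
                 else mu)
      in (pi', mu'))"

definition loc_belief where
  "loc_belief a E l pi0 mu0 \<omega> t i th = fst (beliefs a E l pi0 mu0 \<omega> t) i th"

definition act_belief where
  "act_belief a E l pi0 mu0 \<omega> t i th = snd (beliefs a E l pi0 mu0 \<omega> t) i th"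

end

theory Submission
  imports Defs
begin

text \<open>Fix a false hypothesis \<open>\<theta>\<close>, a source \<open>v\<close> with \<open>K = K\<^sub>v(\<theta>\<^sup>\<star>, \<theta>) > 0\<close> and \<open>d = d(v, i)\<close>.
  Bayesian updating makes the local belief of \<open>v\<close> in \<open>\<theta>\<close> proportional to \<open>exp (- S t)\<close>, where
  \<open>S t\<close> is the accumulated log-likelihood ratio, and by a Chernoff bound and Borel--Cantelli
  almost surely \<open>S t \<ge> (K - \<epsilon>) t\<close> eventually. So this local belief decays like \<open>exp (- K t)\<close>,
  while every belief in \<open>\<theta>\<^sup>\<star>\<close> stays above \<open>c exp (- \<epsilon> t)\<close>. At each triggering time the
  min-protocol passes a small belief one edge further and the normalisation inflates it by at
  most \<open>exp (\<epsilon> t) / c\<close>. Along a shortest path from \<open>v\<close> to \<open>i\<close>, the actual belief of \<open>i\<close>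
  at time \<open>t\<close> is thus controlled by the local belief of \<open>v\<close> at the triggering time \<open>d + 1\<close>
  steps earlier, which is roughly \<open>t / a\<^bsup>d+1\<^esup>\<close>. This gives the rate \<open>K / a\<^bsup>d+1\<^esup>\<close>;
  consistency follows since every false hypothesis has a source.\<close>

lemma exp_le_1_plus_plus_sq:
  fixes y :: real assumes "\<bar>y\<bar> \<le> 1" shows "exp y \<le> 1 + y + y\<^sup>2"
proof (cases "y \<ge> 0")
  case True thus ?thesis using exp_bound[of y] assms by auto
next
  case False
  define u where "u = - y"
  have u: "0 < u" "u \<le> 1" using False assms by (auto simp: u_def)
  have "exp y = 1 / exp u" by (simp add: u_def exp_minus field_simps)
  also have "\<dots> \<le> 1 / (1 + u)" using u exp_ge_add_one_self[of u]
    by (intro divide_left_mono) auto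
  also have "\<dots> \<le> 1 - u + u\<^sup>2"
  proof -
    have "1 \<le> (1 - u + u\<^sup>2) * (1 + u)"
      using u by (simp add: algebra_simps power2_eq_square power3_eq_cube)
    thus ?thesis using u by (simp add: field_simps)
  qed
  finally show ?thesis by (simp add: u_def)
qed

lemma pmf_expectation_exp_le:
  fixes p :: "'a pmf" and f :: "'a \<Rightarrow> real"
  assumes B: "\<And>x. x \<in> set_pmf p \<Longrightarrow> \<bar>f x\<bar> \<le> B" and lam: "0 \<le> lam" "lam * B \<le> 1"
  shows "measure_pmf.expectation p (\<lambda>x. exp (- lam * f x))
           \<le> exp (- lam * measure_pmf.expectation p f + lam\<^sup>2 * B\<^sup>2)"
proof -
  have f_int: "integrable (measure_pmf p) f"
    by (rule measure_pmf.integrable_const_bound[where B=B]) (auto simp: AE_measure_pmf_iff B)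
  have lam_f: "\<bar>- lam * f x\<bar> \<le> lam * B" if "x \<in> set_pmf p" for x
    using lam B[OF that] by (simp add: abs_mult mult_left_mono)
  have pointwise: "exp (- lam * f x) \<le> 1 - lam * f x + lam\<^sup>2 * B\<^sup>2" if x: "x \<in> set_pmf p" for x
  proof -
    have "exp (- lam * f x) \<le> 1 + (- lam * f x) + (- lam * f x)\<^sup>2"
      using lam_f[OF x] lam by (intro exp_le_1_plus_plus_sq) linarith
    moreover have "(- lam * f x)\<^sup>2 \<le> (lam * B)\<^sup>2"
      using lam_f[OF x] by (metis abs_le_square_iff abs_of_nonneg abs_ge_zero order_trans)
    ultimately show ?thesis by (simp add: power_mult_distrib)
  qed
  have exp_int: "integrable (measure_pmf p) (\<lambda>x. exp (- lam * f x))"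
    by (rule measure_pmf.integrable_const_bound[where B="exp (lam * B)"])
       (use lam_f in \<open>auto simp: AE_measure_pmf_iff abs_le_iff\<close>)
  have "measure_pmf.expectation p (\<lambda>x. exp (- lam * f x))
          \<le> measure_pmf.expectation p (\<lambda>x. 1 - lam * f x + lam\<^sup>2 * B\<^sup>2)"
    by (rule integral_mono_AE) (use pointwise exp_int f_int in \<open>auto simp: AE_measure_pmf_iff\<close>)
  also have "\<dots> = 1 + (- lam * measure_pmf.expectation p f + lam\<^sup>2 * B\<^sup>2)"
    using f_int by simp
  also have "\<dots> \<le> exp (- lam * measure_pmf.expectation p f + lam\<^sup>2 * B\<^sup>2)"
    by (rule exp_ge_add_one_self)
  finally show ?thesis .
qed

lemma exists_chernoff_ratio_less_1:
  fixes p :: "'a pmf" and f :: "'a \<Rightarrow> real"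
  assumes B: "\<And>x. x \<in> set_pmf p \<Longrightarrow> \<bar>f x\<bar> \<le> B" and eps: "0 < \<epsilon>"
  shows "\<exists>lam>0. exp (lam * (measure_pmf.expectation p f - \<epsilon>))
                   * measure_pmf.expectation p (\<lambda>x. exp (- lam * f x)) < 1"
proof -
  define B' where "B' = \<bar>B\<bar> + 1"
  have B'_pos: "0 < B'" by (simp add: B'_def)
  have B': "\<bar>f x\<bar> \<le> B'" if "x \<in> set_pmf p" for x using B[OF that] by (simp add: B'_def)
  define lam where "lam = min (1 / B') (\<epsilon> / (2 * B'\<^sup>2))"
  have lam_pos: "0 < lam" using B'_pos eps by (simp add: lam_def)
  have "lam * B' \<le> 1" using B'_pos by (simp add: lam_def min_def field_simps)
  hence mgf: "measure_pmf.expectation p (\<lambda>x. exp (- lam * f x))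
               \<le> exp (- lam * measure_pmf.expectation p f + lam\<^sup>2 * B'\<^sup>2)"
    using lam_pos by (intro pmf_expectation_exp_le[OF B']) auto
  have "lam * B'\<^sup>2 \<le> \<epsilon> / 2"
    using B'_pos mult_right_mono[of lam "\<epsilon> / (2 * B'\<^sup>2)" "B'\<^sup>2"] by (simp add: lam_def)
  hence small: "lam\<^sup>2 * B'\<^sup>2 \<le> lam * (\<epsilon> / 2)"
    using lam_pos mult_left_mono[of "lam * B'\<^sup>2" "\<epsilon> / 2" lam] by (simp add: power2_eq_square ac_simps)
  have "exp (lam * (measure_pmf.expectation p f - \<epsilon>)) * measure_pmf.expectation p (\<lambda>x. exp (- lam * f x))
          \<le> exp (lam * (measure_pmf.expectation p f - \<epsilon>)) * exp (- lam * measure_pmf.expectation p f + lam\<^sup>2 * B'\<^sup>2)"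
    using mgf by (intro mult_left_mono) auto
  also have "\<dots> = exp (lam\<^sup>2 * B'\<^sup>2 - lam * \<epsilon>)"
    by (simp add: mult_exp_exp algebra_simps)
  also have "\<dots> < 1" using small mult_pos_pos[OF lam_pos eps] by simp
  finally show ?thesis using lam_pos by blast
qed

lemma nn_integral_stream_space_exp_sum:
  fixes p :: "'a pmf" and g :: "'a \<Rightarrow> real"
  shows "(\<integral>\<^sup>+\<omega>. ennreal (exp (\<Sum>\<tau><n. g (\<omega> !! \<tau>))) \<partial>stream_space (measure_pmf p))
           = (\<integral>\<^sup>+x. ennreal (exp (g x)) \<partial>measure_pmf p) ^ n"
proof (induction n)
  case 0
  interpret prob_space "stream_space (measure_pmf p)"
    by (rule prob_space.prob_space_stream_space[OF prob_space_measure_pmf])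
  show ?case by (simp add: emeasure_space_1)
next
  case (Suc n)
  have [measurable]: "g \<in> borel_measurable (count_space UNIV)" by simp
  have "(\<integral>\<^sup>+\<omega>. ennreal (exp (\<Sum>\<tau><Suc n. g (\<omega> !! \<tau>))) \<partial>stream_space (measure_pmf p))
      = (\<integral>\<^sup>+x. (\<integral>\<^sup>+\<omega>. ennreal (exp (\<Sum>\<tau><Suc n. g ((x ## \<omega>) !! \<tau>))) \<partial>stream_space (measure_pmf p)) \<partial>measure_pmf p)"
    by (rule prob_space.nn_integral_stream_space[OF prob_space_measure_pmf]) measurable
  also have "\<dots> = (\<integral>\<^sup>+x. ennreal (exp (g x))
                     * (\<integral>\<^sup>+\<omega>. ennreal (exp (\<Sum>\<tau><n. g (\<omega> !! \<tau>))) \<partial>stream_space (measure_pmf p)) \<partial>measure_pmf p)"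
    by (intro nn_integral_cong, subst nn_integral_cmult[symmetric])
       (auto simp del: sum.lessThan_Suc simp: sum.lessThan_Suc_shift exp_add ennreal_mult intro!: nn_integral_cong)
  finally show ?case by (simp add: Suc nn_integral_multc)
qed

lemma emeasure_stream_partial_sum_less_le:
  fixes p :: "'a pmf" and f :: "'a \<Rightarrow> real"
  assumes lam: "0 < lam"
  shows "emeasure (stream_space (measure_pmf p))
           {\<omega> \<in> space (stream_space (measure_pmf p)). (\<Sum>\<tau><n. f (\<omega> !! \<tau>)) < real n * c}
         \<le> (ennreal (exp (lam * c)) * (\<integral>\<^sup>+x. ennreal (exp (- lam * f x)) \<partial>measure_pmf p)) ^ n"
    (is "emeasure ?M ?A \<le> _")
proof -
  have [measurable]: "f \<in> borel_measurable (count_space UNIV)" by simp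
  have "emeasure ?M ?A = (\<integral>\<^sup>+\<omega>. indicator ?A \<omega> \<partial>?M)"
    by (intro nn_integral_indicator[symmetric]) measurable
  also have "\<dots> \<le> (\<integral>\<^sup>+\<omega>. ennreal (exp (lam * c)) ^ n
                          * ennreal (exp (\<Sum>\<tau><n. - lam * f (\<omega> !! \<tau>))) \<partial>?M)"
  proof (rule nn_integral_mono)
    fix \<omega>
    show "indicator ?A \<omega> \<le> ennreal (exp (lam * c)) ^ n * ennreal (exp (\<Sum>\<tau><n. - lam * f (\<omega> !! \<tau>)))"
    proof (cases "\<omega> \<in> ?A")
      case True
      hence "lam * (\<Sum>\<tau><n. f (\<omega> !! \<tau>)) \<le> lam * (real n * c)"
        using lam by (intro mult_left_mono) auto
      moreover have "(\<Sum>\<tau><n. - lam * f (\<omega> !! \<tau>)) = - (lam * (\<Sum>\<tau><n. f (\<omega> !! \<tau>)))"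
        by (simp add: sum_distrib_left sum_negf)
      ultimately have "1 \<le> exp (lam * c) ^ n * exp (\<Sum>\<tau><n. - lam * f (\<omega> !! \<tau>))"
        by (simp add: exp_of_nat_mult[symmetric] mult_exp_exp algebra_simps)
      hence "ennreal 1 \<le> ennreal (exp (lam * c) ^ n * exp (\<Sum>\<tau><n. - lam * f (\<omega> !! \<tau>)))"
        by (rule ennreal_leI)
      thus ?thesis using True by (simp add: ennreal_mult ennreal_power)
    qed simp
  qed
  also have "\<dots> = (ennreal (exp (lam * c)) * (\<integral>\<^sup>+x. ennreal (exp (- lam * f x)) \<partial>measure_pmf p)) ^ n"
    by (simp add: nn_integral_cmult power_mult_distrib
                  nn_integral_stream_space_exp_sum[where g="\<lambda>x. - lam * f x", simplified])
  finally show ?thesis .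
qed

lemma AE_eventually_partial_sum_ge:
  fixes p :: "'a pmf" and f :: "'a \<Rightarrow> real"
  assumes B: "\<And>x. x \<in> set_pmf p \<Longrightarrow> \<bar>f x\<bar> \<le> B" and eps: "0 < \<epsilon>"
  shows "AE \<omega> in stream_space (measure_pmf p).
           eventually (\<lambda>n. real n * (measure_pmf.expectation p f - \<epsilon>) \<le> (\<Sum>\<tau><n. f (\<omega> !! \<tau>))) sequentially"
proof -
  let ?M = "stream_space (measure_pmf p)"
  let ?c = "measure_pmf.expectation p f - \<epsilon>"
  interpret M: prob_space ?M
    by (rule prob_space.prob_space_stream_space[OF prob_space_measure_pmf])
  obtain lam where lam: "0 < lam"
    and chernoff: "exp (lam * ?c) * measure_pmf.expectation p (\<lambda>x. exp (- lam * f x)) < 1"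
    using exists_chernoff_ratio_less_1[of p f B, OF B eps] by blast
  define \<rho> where "\<rho> = exp (lam * ?c) * measure_pmf.expectation p (\<lambda>x. exp (- lam * f x))"
  have \<rho>_less_1: "\<rho> < 1" unfolding \<rho>_def by (fact chernoff)
  have mgf_nonneg: "0 \<le> measure_pmf.expectation p (\<lambda>x. exp (- lam * f x))"
    by (intro integral_nonneg_AE) auto
  hence \<rho>_nonneg: "0 \<le> \<rho>" by (simp add: \<rho>_def)
  have exp_bounded: "\<bar>exp (- lam * f x)\<bar> \<le> exp (lam * \<bar>B\<bar>)" if "x \<in> set_pmf p" for x
    using lam B[OF that] mult_left_mono[of "- f x" "\<bar>B\<bar>" lam] by simp
  have mgf_eq: "(\<integral>\<^sup>+x. ennreal (exp (- lam * f x)) \<partial>measure_pmf p)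
                  = ennreal (measure_pmf.expectation p (\<lambda>x. exp (- lam * f x)))"
    by (intro nn_integral_eq_integral measure_pmf.integrable_const_bound[where B="exp (lam * \<bar>B\<bar>)"])
       (use exp_bounded in \<open>auto simp: AE_measure_pmf_iff\<close>)
  have \<rho>_power: "ennreal (\<rho> ^ n)
      = (ennreal (exp (lam * ?c)) * ennreal (measure_pmf.expectation p (\<lambda>x. exp (- lam * f x)))) ^ n" for n
    unfolding ennreal_power[OF \<rho>_nonneg, symmetric] unfolding \<rho>_def ennreal_mult'[OF exp_ge_zero] ..
  define A where "A n = {\<omega> \<in> space ?M. (\<Sum>\<tau><n. f (\<omega> !! \<tau>)) < real n * ?c}" for n
  have tail: "emeasure ?M (A n) \<le> ennreal (\<rho> ^ n)" for n
    using emeasure_stream_partial_sum_less_le[OF lam, of p f n ?c] unfolding A_def \<rho>_power mgf_eq .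
  have [measurable]: "f \<in> borel_measurable (count_space UNIV)" by simp
  have A_sets: "A n \<in> sets ?M" for n unfolding A_def by measurable
  have "summable (\<lambda>n. measure ?M (A n))"
    by (rule summable_comparison_test[OF _ summable_geometric[of \<rho>]])
       (use tail \<rho>_nonneg \<rho>_less_1 in \<open>auto simp: M.emeasure_eq_measure\<close>)
  hence "AE \<omega> in ?M. eventually (\<lambda>n. \<omega> \<in> space ?M - A n) sequentially"
    by (intro borel_cantelli_AE1[OF A_sets]) (simp_all add: M.emeasure_finite less_top[symmetric])
  thus ?thesis by (rule AE_mp) (auto simp: A_def not_less elim!: eventually_mono)
qed

lemma trig_Suc_eq_mult_add_1: "trig a (Suc n) = a * trig a n + 1"
proof (induction n)
  case (Suc n)
  have "trig a (Suc (Suc n)) = a * trig a n + 1 + a * a ^ Suc n" using Suc by simp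
  also have "\<dots> = a * trig a (Suc n) + 1" by (simp add: algebra_simps)
  finally show ?case .
qed simp

lemma trig_add_Suc: "trig a (n + Suc d) = a ^ Suc d * trig a n + trig a d"
proof (induction d)
  case 0 thus ?case using trig_Suc_eq_mult_add_1[of a n] by simp
next
  case (Suc d)
  have "trig a (n + Suc (Suc d)) = a * trig a (n + Suc d) + 1"
    by (simp only: add_Suc_right trig_Suc_eq_mult_add_1)
  also have "\<dots> = a ^ Suc (Suc d) * trig a n + (a * trig a d + 1)"
    by (simp only: Suc.IH) (simp add: algebra_simps)
  finally show ?case by (simp only: trig_Suc_eq_mult_add_1)
qed

lemma trig_pos: "0 < trig a k"
  by (induction k) auto

lemma strict_mono_trig: "1 \<le> a \<Longrightarrow> strict_mono (trig a)"
  unfolding strict_mono_Suc_iff by simp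

lemma trig_bracket:
  assumes "1 \<le> a" "1 \<le> t" obtains k where "trig a k \<le> t" "t < trig a (Suc k)"
proof -
  have "t < trig a (Suc t)"
    using seq_suble[OF strict_mono_trig[OF assms(1)], of "Suc t"] by simp
  hence ex: "\<exists>k. t < trig a k" by blast
  define k where "k = (LEAST k. t < trig a k)"
  have k: "t < trig a k" unfolding k_def by (rule LeastI_ex[OF ex])
  moreover have "k \<noteq> 0" using k assms(2) by (intro notI) simp
  then obtain k' where "k = Suc k'" by (cases k) auto
  moreover have "\<not> t < trig a k'" using not_less_Least[of k' "\<lambda>k. t < trig a k"] \<open>k = Suc k'\<close> k_def by simp
  ultimately show thesis using that[of k'] by simp
qed

lemma not_in_range_trig:
  assumes "1 \<le> a" "trig a k < t" "t < trig a (Suc k)" shows "t \<notin> range (trig a)"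
proof
  assume "t \<in> range (trig a)"
  then obtain m where m: "t = trig a m" by auto
  have "k < m" "m < Suc k"
    using assms m strict_mono_less[OF strict_mono_trig[OF assms(1)]] by blast+
  thus False by simp
qed

lemma exists_uniform_exp_lower_bound:
  fixes f :: "nat \<Rightarrow> 'i::finite \<Rightarrow> real"
  assumes pos: "\<And>t i. 0 < f t i" and b: "0 < b"
    and ev: "\<And>t i. T \<le> t \<Longrightarrow> b * exp (- \<epsilon> * real t) \<le> f t i"
  obtains c where "0 < c" "\<And>t i. c * exp (- \<epsilon> * real t) \<le> f t i"
proof -
  define F where "F = (\<lambda>(t, i). f t i * exp (\<epsilon> * real t)) ` ({..<T} \<times> UNIV)"
  define c where "c = Min (insert b F)"
  have fin: "finite (insert b F)" by (simp add: F_def)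
  have "0 < c" unfolding c_def using fin b pos by (subst Min_gr_iff) (auto simp: F_def)
  moreover have "c * exp (- \<epsilon> * real t) \<le> f t i" for t i
  proof (cases "t < T")
    case True
    have "c \<le> f t i * exp (\<epsilon> * real t)"
      unfolding c_def using fin True by (intro Min_le) (auto simp: F_def)
    hence "c * exp (- \<epsilon> * real t) \<le> f t i * exp (\<epsilon> * real t) * exp (- \<epsilon> * real t)"
      by (rule mult_right_mono) simp
    thus ?thesis by (simp add: mult.assoc mult_exp_exp)
  next
    case False
    have "c \<le> b" unfolding c_def using fin by (intro Min_le) auto
    hence "c * exp (- \<epsilon> * real t) \<le> b * exp (- \<epsilon> * real t)" by (rule mult_right_mono) simp
    also have "\<dots> \<le> f t i" using False by (intro ev) simp
    finally show ?thesis .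
  qed
  ultimately show thesis by (rule that)
qed

lemma relpow_dist_graph:
  assumes "strongly_connected E" shows "(v, i) \<in> E ^^ dist_graph E v i"
proof -
  obtain n where "(v, i) \<in> E ^^ n"
    using assms by (auto simp: strongly_connected_def rtrancl_power)
  thus ?thesis unfolding dist_graph_def by (rule LeastI)
qed

lemma eventually_less_divide_of_linear_lower_bound:
  fixes g :: "nat \<Rightarrow> real"
  assumes y: "y < \<alpha>" and lower: "eventually (\<lambda>t. \<alpha> * real t - \<beta> \<le> g t) sequentially"
  shows "eventually (\<lambda>t. y < g t / real t) sequentially"
proof -
  obtain N :: nat where N: "\<beta> / (\<alpha> - y) < real N" using reals_Archimedean2 by blast
  have "eventually (\<lambda>t. \<beta> < (\<alpha> - y) * real t \<and> 0 < real t) sequentially"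
  proof (rule eventually_sequentiallyI[of "Suc N"])
    fix t assume t: "Suc N \<le> t"
    hence "\<beta> / (\<alpha> - y) < real t" using N by linarith
    thus "\<beta> < (\<alpha> - y) * real t \<and> 0 < real t"
      using y t by (auto simp: pos_divide_less_eq mult.commute)
  qed
  thus ?thesis using lower
    by eventually_elim (simp add: pos_less_divide_eq algebra_simps)
qed

locale learning_rule =
  fixes a :: nat
    and E :: "('v::finite \<times> 'v) set"
    and l :: "'h::finite \<Rightarrow> ('v \<Rightarrow> 's) pmf"
    and Sig :: "'v \<Rightarrow> 's set"
    and th_star :: 'h
    and pi0 mu0 :: "'v \<Rightarrow> 'h \<Rightarrow> real"
  assumes a_ge_1: "1 \<le> a"
    and Sig_finite: "\<And>i. finite (Sig i)"
    and supp: "\<And>th s i. s \<in> set_pmf (l th) \<Longrightarrow> s i \<in> Sig i"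
    and lik_pos: "\<And>i th w. w \<in> Sig i \<Longrightarrow> 0 < lik l i th w"
    and pi0_sum: "\<And>i. (\<Sum>th\<in>UNIV. pi0 i th) = 1"
    and mu0_sum: "\<And>i. (\<Sum>th\<in>UNIV. mu0 i th) = 1"
    and pi0_pos: "\<And>i th. 0 < pi0 i th"
    and mu0_pos: "\<And>i th. 0 < mu0 i th"
begin

declare beliefs.simps(2)[simp del]

abbreviation \<pi> where "\<pi> \<omega> t \<equiv> fst (beliefs a E l pi0 mu0 \<omega> t)"
abbreviation \<mu> where "\<mu> \<omega> t \<equiv> snd (beliefs a E l pi0 mu0 \<omega> t)"

definition llr :: "'v \<Rightarrow> 'h \<Rightarrow> 's \<Rightarrow> real" where
  "llr i th w = ln (lik l i th_star w) - ln (lik l i th w)"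

definition llr_sum :: "('v \<Rightarrow> 's) stream \<Rightarrow> nat \<Rightarrow> 'v \<Rightarrow> 'h \<Rightarrow> real" where
  "llr_sum \<omega> t i th = (\<Sum>\<tau><t. llr i th ((\<omega> !! \<tau>) i))"

definition supported :: "('v \<Rightarrow> 's) stream \<Rightarrow> bool" where
  "supported \<omega> \<longleftrightarrow> (\<forall>t. \<omega> !! t \<in> set_pmf (l th_star))"

lemma supported_signal: "supported \<omega> \<Longrightarrow> (\<omega> !! t) i \<in> Sig i"
  unfolding supported_def using supp by blast

lemma lik_eq_exp_llr: "w \<in> Sig i \<Longrightarrow> lik l i th w = lik l i th_star w * exp (- llr i th w)"
  using lik_pos[of w i th] lik_pos[of w i th_star] by (simp add: llr_def exp_diff)

lemma loc_belief_Suc: "\<pi> \<omega> (Suc t) i th = lik l i th ((\<omega> !! t) i) * \<pi> \<omega> t i th /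
     (\<Sum>p\<in>UNIV. lik l i p ((\<omega> !! t) i) * \<pi> \<omega> t i p)"
  by (simp add: beliefs.simps(2) Let_def)

lemma loc_belief_eq:
  assumes \<omega>: "supported \<omega>"
  shows "\<pi> \<omega> t i th = pi0 i th * exp (- llr_sum \<omega> t i th)
                       / (\<Sum>p\<in>UNIV. pi0 i p * exp (- llr_sum \<omega> t i p))"
proof (induction t arbitrary: th)
  case 0
  then show ?case by (simp add: llr_sum_def pi0_sum)
next
  case (Suc t)
  define w where "w = (\<omega> !! t) i"
  have w: "w \<in> Sig i" unfolding w_def by (rule supported_signal[OF \<omega>])
  define A where "A p = pi0 i p * exp (- llr_sum \<omega> t i p)" for p
  define A' where "A' p = pi0 i p * exp (- llr_sum \<omega> (Suc t) i p)" for p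
  define Z where "Z = (\<Sum>p\<in>UNIV. A p)"
  define c where "c = lik l i th_star w"
  have c_pos: "0 < c" unfolding c_def using lik_pos[OF w] .
  have Z_pos: "0 < Z" unfolding Z_def A_def by (intro sum_pos) (auto simp: pi0_pos)
  have Z'_pos: "0 < (\<Sum>p\<in>UNIV. A' p)" unfolding A'_def by (intro sum_pos) (auto simp: pi0_pos)
  have step: "lik l i p w * A p = c * A' p" for p
    using lik_eq_exp_llr[OF w, of p]
    by (simp add: A_def A'_def c_def llr_sum_def w_def exp_add[symmetric] algebra_simps)
  have "\<pi> \<omega> (Suc t) i th = lik l i th w * (A th / Z) / (\<Sum>p\<in>UNIV. lik l i p w * (A p / Z))"
    by (subst loc_belief_Suc) (simp add: Suc.IH A_def Z_def w_def)
  also have "(\<Sum>p\<in>UNIV. lik l i p w * (A p / Z)) = c * (\<Sum>p\<in>UNIV. A' p) / Z"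
    by (simp add: sum_divide_distrib[symmetric] sum_distrib_left step)
  also have "lik l i th w * (A th / Z) / (c * (\<Sum>p\<in>UNIV. A' p) / Z) = A' th / (\<Sum>p\<in>UNIV. A' p)"
    using step[of th] Z_pos c_pos Z'_pos by (simp add: field_simps)
  finally show ?case unfolding A'_def .
qed

lemma loc_belief_pos: "supported \<omega> \<Longrightarrow> 0 < \<pi> \<omega> t i th"
  by (subst loc_belief_eq) (auto intro!: divide_pos_pos sum_pos simp: pi0_pos)

lemma loc_belief_sum: "supported \<omega> \<Longrightarrow> (\<Sum>th\<in>UNIV. \<pi> \<omega> t i th) = 1"
proof -
  assume \<omega>: "supported \<omega>"
  have "0 < (\<Sum>p\<in>UNIV. pi0 i p * exp (- llr_sum \<omega> t i p))" by (intro sum_pos) (auto simp: pi0_pos)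
  thus ?thesis by (simp add: loc_belief_eq[OF \<omega>] sum_divide_distrib[symmetric])
qed

lemma loc_belief_le:
  assumes \<omega>: "supported \<omega>"
  shows "\<pi> \<omega> t i th \<le> pi0 i th / pi0 i th_star * exp (- llr_sum \<omega> t i th)"
proof -
  define Z where "Z = (\<Sum>p\<in>UNIV. pi0 i p * exp (- llr_sum \<omega> t i p))"
  have "pi0 i th_star * exp (- llr_sum \<omega> t i th_star) \<le> Z" unfolding Z_def
    by (rule member_le_sum) (auto intro: less_imp_le simp: pi0_pos)
  hence "pi0 i th_star \<le> Z" by (simp add: llr_sum_def llr_def)
  hence "pi0 i th * exp (- llr_sum \<omega> t i th) / Z \<le> pi0 i th * exp (- llr_sum \<omega> t i th) / pi0 i th_star"
    using pi0_pos[of i th_star] pi0_pos[of i th] by (intro divide_left_mono) auto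
  thus ?thesis by (simp add: loc_belief_eq[OF \<omega>] Z_def)
qed

lemma loc_belief_true_ge:
  assumes \<omega>: "supported \<omega>" and c: "\<And>p. - c \<le> llr_sum \<omega> t i p"
  shows "pi0 i th_star * exp (- c) \<le> \<pi> \<omega> t i th_star"
proof -
  define Z where "Z = (\<Sum>p\<in>UNIV. pi0 i p * exp (- llr_sum \<omega> t i p))"
  have Z_pos: "0 < Z" unfolding Z_def by (intro sum_pos) (auto simp: pi0_pos)
  have exp_le: "exp (- llr_sum \<omega> t i p) \<le> exp c" for p using c[of p] by simp
  have "Z \<le> (\<Sum>p\<in>UNIV. pi0 i p * exp c)" unfolding Z_def
    by (intro sum_mono mult_left_mono exp_le) (auto intro: less_imp_le pi0_pos)
  also have "\<dots> = exp c" by (simp add: sum_distrib_right[symmetric] pi0_sum)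
  finally have "pi0 i th_star / exp c \<le> pi0 i th_star / Z"
    using Z_pos pi0_pos[of i th_star] by (intro divide_left_mono) auto
  thus ?thesis by (simp add: loc_belief_eq[OF \<omega>] Z_def llr_sum_def llr_def exp_minus field_simps)
qed

definition minp :: "('v \<Rightarrow> 's) stream \<Rightarrow> nat \<Rightarrow> 'v \<Rightarrow> 'h \<Rightarrow> real" where
  "minp \<omega> t i th = Min (insert (\<pi> \<omega> (Suc t) i th) ((\<lambda>j. \<mu> \<omega> t j th) ` nbrs E i))"

lemma act_belief_Suc_trig:
  "Suc t \<in> range (trig a) \<Longrightarrow> \<mu> \<omega> (Suc t) i th = minp \<omega> t i th / (\<Sum>p\<in>UNIV. minp \<omega> t i p)"
  unfolding minp_def by (simp add: beliefs.simps(2) Let_def)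

lemma act_belief_Suc_not_trig: "Suc t \<notin> range (trig a) \<Longrightarrow> \<mu> \<omega> (Suc t) = \<mu> \<omega> t"
  by (simp add: beliefs.simps(2) Let_def)

lemma minp_le_loc_belief: "minp \<omega> t i th \<le> \<pi> \<omega> (Suc t) i th"
  unfolding minp_def by (rule Min_le) auto

lemma minp_le_act_belief: "j \<in> nbrs E i \<Longrightarrow> minp \<omega> t i th \<le> \<mu> \<omega> t j th"
  unfolding minp_def by (rule Min_le) auto

lemma minp_ge: "m \<le> \<pi> \<omega> (Suc t) i th \<Longrightarrow> (\<And>j. m \<le> \<mu> \<omega> t j th) \<Longrightarrow> m \<le> minp \<omega> t i th"
  unfolding minp_def by (subst Min_ge_iff) auto

lemma minp_pos_if: "supported \<omega> \<Longrightarrow> (\<And>j. 0 < \<mu> \<omega> t j th) \<Longrightarrow> 0 < minp \<omega> t i th"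
  unfolding minp_def by (subst Min_gr_iff) (auto intro: loc_belief_pos)

lemma act_belief_pos_sum:
  assumes \<omega>: "supported \<omega>"
  shows "(\<forall>i th. 0 < \<mu> \<omega> t i th) \<and> (\<forall>i. (\<Sum>th\<in>UNIV. \<mu> \<omega> t i th) = 1)"
proof (induction t)
  case 0
  then show ?case by (simp add: mu0_pos mu0_sum)
next
  case (Suc t)
  show ?case
  proof (cases "Suc t \<in> range (trig a)")
    case True
    have pos: "0 < minp \<omega> t i th" for i th using minp_pos_if[OF \<omega>] Suc by blast
    have sum_pos: "0 < (\<Sum>p\<in>UNIV. minp \<omega> t i p)" for i by (intro sum_pos) (auto intro: pos)
    show ?thesis
    proof (intro conjI allI)
      fix i th show "0 < \<mu> \<omega> (Suc t) i th"
        using pos[of i th] sum_pos[of i] by (simp add: act_belief_Suc_trig[OF True])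
    next
      fix i show "(\<Sum>th\<in>UNIV. \<mu> \<omega> (Suc t) i th) = 1"
        using sum_pos[of i] by (simp add: act_belief_Suc_trig[OF True] sum_divide_distrib[symmetric])
    qed
  next
    case False
    then show ?thesis using Suc by (simp add: act_belief_Suc_not_trig)
  qed
qed

lemma act_belief_pos: "supported \<omega> \<Longrightarrow> 0 < \<mu> \<omega> t i th"
  using act_belief_pos_sum by blast

lemma act_belief_le_1: "supported \<omega> \<Longrightarrow> \<mu> \<omega> t i th \<le> 1"
  using member_le_sum[of th UNIV "\<mu> \<omega> t i"] act_belief_pos_sum[of \<omega> t]
  by (auto intro: less_imp_le)

lemma minp_pos: "supported \<omega> \<Longrightarrow> 0 < minp \<omega> t i th"
  by (intro minp_pos_if act_belief_pos)

lemma minp_sum_pos: "supported \<omega> \<Longrightarrow> 0 < (\<Sum>p\<in>UNIV. minp \<omega> t i p)"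
  by (intro sum_pos minp_pos) auto

lemma act_belief_Suc_trig_ge:
  assumes \<omega>: "supported \<omega>" and trig: "Suc t \<in> range (trig a)"
  shows "minp \<omega> t i th \<le> \<mu> \<omega> (Suc t) i th"
proof -
  have "(\<Sum>p\<in>UNIV. minp \<omega> t i p) \<le> (\<Sum>p\<in>UNIV. \<pi> \<omega> (Suc t) i p)"
    by (intro sum_mono minp_le_loc_belief)
  also have "\<dots> = 1" by (rule loc_belief_sum[OF \<omega>])
  finally have "minp \<omega> t i th / 1 \<le> minp \<omega> t i th / (\<Sum>p\<in>UNIV. minp \<omega> t i p)"
    using less_imp_le[OF minp_pos[OF \<omega>]] minp_sum_pos[OF \<omega>] by (intro divide_left_mono) auto
  thus ?thesis by (simp add: act_belief_Suc_trig[OF trig])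
qed

lemma act_belief_Suc_trig_le:
  assumes \<omega>: "supported \<omega>" and trig: "Suc t \<in> range (trig a)"
  shows "\<mu> \<omega> (Suc t) i th \<le> minp \<omega> t i th / minp \<omega> t i th_star"
proof -
  have "minp \<omega> t i th_star \<le> (\<Sum>p\<in>UNIV. minp \<omega> t i p)"
    by (rule member_le_sum) (auto intro: less_imp_le minp_pos[OF \<omega>])
  hence "minp \<omega> t i th / (\<Sum>p\<in>UNIV. minp \<omega> t i p) \<le> minp \<omega> t i th / minp \<omega> t i th_star"
    using less_imp_le[OF minp_pos[OF \<omega>]] minp_pos[OF \<omega>] minp_sum_pos[OF \<omega>]
    by (intro divide_left_mono mult_pos_pos) auto
  thus ?thesis by (simp add: act_belief_Suc_trig[OF trig])
qed

lemma act_belief_eq_between_trig: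
  assumes "trig a k \<le> t" "t < trig a (Suc k)"
  shows "\<mu> \<omega> t = \<mu> \<omega> (trig a k)"
proof -
  have "trig a k + j < trig a (Suc k) \<Longrightarrow> \<mu> \<omega> (trig a k + j) = \<mu> \<omega> (trig a k)" for j
  proof (induction j)
    case (Suc j)
    have "Suc (trig a k + j) \<notin> range (trig a)"
      using Suc.prems by (intro not_in_range_trig[OF a_ge_1, of k]) auto
    thus ?case using Suc by (simp add: act_belief_Suc_not_trig)
  qed simp
  from this[of "t - trig a k"] assms show ?thesis by simp
qed

lemma act_belief_true_ge:
  assumes \<omega>: "supported \<omega>" and c: "0 < c" and \<epsilon>: "0 \<le> \<epsilon>"
    and loc: "\<And>t i. c * exp (- \<epsilon> * real t) \<le> \<pi> \<omega> t i th_star"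
    and init: "\<And>i. c \<le> mu0 i th_star"
  shows "c * exp (- \<epsilon> * real t) \<le> \<mu> \<omega> t i th_star"
proof (induction t arbitrary: i)
  case 0
  then show ?case using init by simp
next
  case (Suc t)
  have step: "c * exp (- \<epsilon> * real (Suc t)) \<le> c * exp (- \<epsilon> * real t)"
    using c \<epsilon> by (simp add: mult_left_mono)
  show ?case
  proof (cases "Suc t \<in> range (trig a)")
    case True
    have "c * exp (- \<epsilon> * real (Suc t)) \<le> minp \<omega> t i th_star"
      using Suc.IH step by (intro minp_ge loc) (blast intro: order_trans)
    also have "\<dots> \<le> \<mu> \<omega> (Suc t) i th_star" by (rule act_belief_Suc_trig_ge[OF \<omega> True])
    finally show ?thesis .
  next
    case False
    then show ?thesis using Suc.IH[of i] step by (simp add: act_belief_Suc_not_trig)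
  qed
qed

text \<open>The floor keeps the normalisation in the min-protocol from inflating a belief by more
  than \<open>exp (\<epsilon> t) / c\<close>.\<close>

definition true_state_floor :: "real \<Rightarrow> real \<Rightarrow> ('v \<Rightarrow> 's) stream \<Rightarrow> bool" where
  "true_state_floor c \<epsilon> \<omega> \<longleftrightarrow> (\<forall>t i. c * exp (- \<epsilon> * real t) \<le> \<pi> \<omega> t i th_star
                                      \<and> c * exp (- \<epsilon> * real t) \<le> \<mu> \<omega> t i th_star)"

lemma act_belief_Suc_trig_le_exp:
  assumes \<omega>: "supported \<omega>" and c: "0 < c" and \<epsilon>: "0 \<le> \<epsilon>"
    and floor: "true_state_floor c \<epsilon> \<omega>" and trig: "Suc t \<in> range (trig a)"
  shows "\<mu> \<omega> (Suc t) i th \<le> exp (\<epsilon> * real (Suc t)) / c * minp \<omega> t i th"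
proof -
  have "c * exp (- \<epsilon> * real (Suc t)) \<le> c * exp (- \<epsilon> * real t)"
    using c \<epsilon> by (simp add: mult_left_mono)
  hence floor_Suc: "c * exp (- \<epsilon> * real (Suc t)) \<le> minp \<omega> t i th_star"
    using floor unfolding true_state_floor_def by (intro minp_ge) (blast intro: order_trans)+
  have "\<mu> \<omega> (Suc t) i th \<le> minp \<omega> t i th / minp \<omega> t i th_star"
    by (rule act_belief_Suc_trig_le[OF \<omega> trig])
  also have "\<dots> \<le> minp \<omega> t i th / (c * exp (- \<epsilon> * real (Suc t)))"
    using floor_Suc c minp_pos[OF \<omega>] less_imp_le[OF minp_pos[OF \<omega>]]
    by (intro divide_left_mono mult_pos_pos) auto
  also have "\<dots> = exp (\<epsilon> * real (Suc t)) / c * minp \<omega> t i th"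
    using c by (simp add: exp_minus field_simps mult_exp_exp)
  finally show ?thesis .
qed

lemma act_belief_le_along_path:
  assumes \<omega>: "supported \<omega>" and c: "0 < c" and \<epsilon>: "0 \<le> \<epsilon>" and floor: "true_state_floor c \<epsilon> \<omega>"
  shows "(v, i) \<in> E ^^ d \<Longrightarrow> d \<le> k \<Longrightarrow>
    \<mu> \<omega> (trig a k) i th \<le> (exp (\<epsilon> * real (trig a k)) / c) ^ Suc d * \<pi> \<omega> (trig a (k - d)) v th"
proof (induction d arbitrary: i k)
  case 0
  define t where "t = trig a k - 1"
  have t: "Suc t = trig a k" using trig_pos[of a k] by (simp add: t_def)
  have "\<mu> \<omega> (Suc t) i th \<le> exp (\<epsilon> * real (Suc t)) / c * minp \<omega> t i th"
    using t by (intro act_belief_Suc_trig_le_exp[OF \<omega> c \<epsilon> floor]) auto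
  also have "\<dots> \<le> exp (\<epsilon> * real (Suc t)) / c * \<pi> \<omega> (Suc t) i th"
    using c by (intro mult_left_mono minp_le_loc_belief) auto
  finally show ?case using 0 t by simp
next
  case (Suc d)
  from Suc.prems(1) obtain j where vj: "(v, j) \<in> E ^^ d" and ji: "(j, i) \<in> E" by (rule relpow_Suc_E)
  from Suc.prems(2) obtain k' where k: "k = Suc k'" and dk: "d \<le> k'" by (cases k) auto
  define t where "t = trig a k - 1"
  have t: "Suc t = trig a k" using trig_pos[of a k] by (simp add: t_def)
  have "trig a k' < trig a k" by (rule strict_monoD[OF strict_mono_trig[OF a_ge_1]]) (simp add: k)
  hence t_between: "trig a k' \<le> t" "t < trig a (Suc k')"
    using trig_pos[of a k] unfolding t_def k by (simp_all del: trig.simps)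
  define C where "C = exp (\<epsilon> * real (trig a k)) / c"
  define C' where "C' = exp (\<epsilon> * real (trig a k')) / c"
  have C'_le_C: "C' \<le> C" unfolding C_def C'_def using c \<epsilon>
    by (intro divide_right_mono) (auto intro!: mult_left_mono simp: k)
  have C_nonneg: "0 \<le> C" and C'_nonneg: "0 \<le> C'" using c by (simp_all add: C_def C'_def)
  have "\<mu> \<omega> (trig a k) i th \<le> C * minp \<omega> t i th"
    using act_belief_Suc_trig_le_exp[OF \<omega> c \<epsilon> floor, of t i th] t by (simp add: C_def)
  also have "\<dots> \<le> C * \<mu> \<omega> (trig a k') j th"
    using minp_le_act_belief[of j i \<omega> t th] ji act_belief_eq_between_trig[OF t_between]
    by (intro mult_left_mono[OF _ C_nonneg]) (auto simp: nbrs_def)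
  also have "\<dots> \<le> C * (C' ^ Suc d * \<pi> \<omega> (trig a (k' - d)) v th)"
    using Suc.IH[OF vj dk] by (intro mult_left_mono[OF _ C_nonneg]) (simp add: C'_def)
  also have "\<dots> \<le> C * (C ^ Suc d * \<pi> \<omega> (trig a (k' - d)) v th)"
    using C'_le_C C'_nonneg C_nonneg less_imp_le[OF loc_belief_pos[OF \<omega>]]
    by (intro mult_left_mono mult_right_mono power_mono) auto
  finally show ?case by (simp add: C_def k)
qed

lemma lik_sum: "(\<Sum>w\<in>Sig i. lik l i th w) = 1"
  unfolding lik_def by (rule sum_pmf_eq_1[OF Sig_finite]) (auto intro: supp)

lemma KL_nonneg: "0 \<le> KL l Sig i p q"
proof -
  have "lik l i p w - lik l i q w \<le> lik l i p w * ln (lik l i p w / lik l i q w)" if w: "w \<in> Sig i" for w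
  proof -
    define x y where "x = lik l i p w" and "y = lik l i q w"
    have x: "0 < x" and y: "0 < y" using lik_pos[OF w] by (auto simp: x_def y_def)
    have "ln (y / x) \<le> y / x - 1" using x y by (intro ln_le_minus_one) auto
    hence "x * (1 - y / x) \<le> x * ln (x / y)" using x y by (intro mult_left_mono) (auto simp: ln_div)
    thus ?thesis using x by (simp add: x_def y_def field_simps)
  qed
  hence "(\<Sum>w\<in>Sig i. lik l i p w - lik l i q w) \<le> KL l Sig i p q"
    unfolding KL_def by (intro sum_mono)
  thus ?thesis by (simp add: sum_subtractf lik_sum)
qed

lemma expectation_llr_eq_KL:
  "measure_pmf.expectation (l th_star) (\<lambda>s. llr i th (s i)) = KL l Sig i th_star th"
proof -
  have "measure_pmf.expectation (l th_star) (\<lambda>s. llr i th (s i))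
          = measure_pmf.expectation (map_pmf (\<lambda>s. s i) (l th_star)) (llr i th)" by simp
  also have "\<dots> = (\<Sum>w\<in>Sig i. lik l i th_star w *\<^sub>R llr i th w)"
    unfolding lik_def by (rule integral_measure_pmf[OF Sig_finite]) (auto intro: supp)
  also have "\<dots> = KL l Sig i th_star th"
    unfolding KL_def
  proof (intro sum.cong refl)
    fix w assume w: "w \<in> Sig i"
    show "lik l i th_star w *\<^sub>R llr i th w = lik l i th_star w * ln (lik l i th_star w / lik l i th w)"
      using lik_pos[OF w, of th_star] lik_pos[OF w, of th] by (simp add: llr_def ln_div)
  qed
  finally show ?thesis .
qed

definition llr_growth :: "('v \<Rightarrow> 's) stream \<Rightarrow> bool" where
  "llr_growth \<omega> \<longleftrightarrow> (\<forall>i th \<epsilon>. 0 < \<epsilon> \<longrightarrow>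
     eventually (\<lambda>t. real t * (KL l Sig i th_star th - \<epsilon>) \<le> llr_sum \<omega> t i th) sequentially)"

lemma exists_true_state_floor:
  assumes \<omega>: "supported \<omega>" and growth: "llr_growth \<omega>" and \<epsilon>: "0 < \<epsilon>"
  obtains c where "0 < c" "true_state_floor c \<epsilon> \<omega>"
proof -
  have "eventually (\<lambda>t. - \<epsilon> * real t \<le> llr_sum \<omega> t i p) sequentially" for i p
  proof -
    have "eventually (\<lambda>t. real t * (KL l Sig i th_star p - \<epsilon>) \<le> llr_sum \<omega> t i p) sequentially"
      using growth \<epsilon> unfolding llr_growth_def by blast
    moreover have "- \<epsilon> * real t \<le> real t * (KL l Sig i th_star p - \<epsilon>)" for t
      using KL_nonneg[of i th_star p] by (simp add: algebra_simps)
    ultimately show ?thesis by (elim eventually_mono) (rule order_trans)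
  qed
  hence "eventually (\<lambda>t. \<forall>i p. - \<epsilon> * real t \<le> llr_sum \<omega> t i p) sequentially"
    by (intro eventually_all_finite)
  then obtain T where T: "\<And>t i p. T \<le> t \<Longrightarrow> - \<epsilon> * real t \<le> llr_sum \<omega> t i p"
    unfolding eventually_sequentially by blast
  define b where "b = Min (range (\<lambda>i. pi0 i th_star))"
  have b: "0 < b" unfolding b_def by (subst Min_gr_iff) (auto intro: pi0_pos)
  have "b * exp (- \<epsilon> * real t) \<le> \<pi> \<omega> t i th_star" if "T \<le> t" for t i
  proof -
    have "b * exp (- (\<epsilon> * real t)) \<le> pi0 i th_star * exp (- (\<epsilon> * real t))"
      unfolding b_def by (intro mult_right_mono Min_le) auto
    also have "\<dots> \<le> \<pi> \<omega> t i th_star"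
      using T[OF that] by (intro loc_belief_true_ge[OF \<omega>]) simp
    finally show ?thesis by simp
  qed
  then obtain c0 where c0: "0 < c0" "\<And>t i. c0 * exp (- \<epsilon> * real t) \<le> \<pi> \<omega> t i th_star"
    using exists_uniform_exp_lower_bound[of "\<lambda>t i. \<pi> \<omega> t i th_star" b T \<epsilon>] loc_belief_pos[OF \<omega>] b
    by blast
  define c where "c = min c0 (Min (range (\<lambda>i. mu0 i th_star)))"
  have c: "0 < c" unfolding c_def using c0(1) by (simp add: Min_gr_iff mu0_pos)
  have loc: "c * exp (- \<epsilon> * real t) \<le> \<pi> \<omega> t i th_star" for t i
    by (rule order_trans[OF mult_right_mono c0(2)]) (simp_all add: c_def)
  have "c \<le> mu0 i th_star" for i unfolding c_def by (simp add: min.coboundedI2)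
  hence "c * exp (- \<epsilon> * real t) \<le> \<mu> \<omega> t i th_star" for t i
    using \<epsilon> by (intro act_belief_true_ge[OF \<omega> c _ loc]) auto
  with loc have "true_state_floor c \<epsilon> \<omega>" by (simp add: true_state_floor_def)
  with c show thesis by (rule that)
qed

lemma act_belief_le_between_trig:
  assumes \<omega>: "supported \<omega>" and c: "0 < c" and \<epsilon>: "0 \<le> \<epsilon>" and floor: "true_state_floor c \<epsilon> \<omega>"
    and path: "(v, i) \<in> E ^^ d" and "d \<le> k" and t: "trig a k \<le> t" "t < trig a (Suc k)"
  shows "\<mu> \<omega> t i th \<le> (exp (\<epsilon> * real t) / c) ^ Suc d * \<pi> \<omega> (trig a (k - d)) v th"
proof -
  have "\<mu> \<omega> t i th = \<mu> \<omega> (trig a k) i th" using act_belief_eq_between_trig[OF t] by simp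
  also have "\<dots> \<le> (exp (\<epsilon> * real (trig a k)) / c) ^ Suc d * \<pi> \<omega> (trig a (k - d)) v th"
    by (rule act_belief_le_along_path[OF \<omega> c \<epsilon> floor path \<open>d \<le> k\<close>])
  also have "\<dots> \<le> (exp (\<epsilon> * real t) / c) ^ Suc d * \<pi> \<omega> (trig a (k - d)) v th"
    using c \<epsilon> t(1) less_imp_le[OF loc_belief_pos[OF \<omega>]]
    by (intro mult_right_mono power_mono divide_right_mono) (auto intro: mult_left_mono)
  finally show ?thesis .
qed

text \<open>Between the triggering times \<open>t\<^sub>k \<le> t < t\<^sub>k\<^sub>+\<^sub>1\<close> the belief of \<open>i\<close> is bounded by the local
  belief of \<open>v\<close> at \<open>t\<^sub>k\<^sub>-\<^sub>d\<close>, and \<open>t < a\<^bsup>d+1\<^esup> t\<^sub>k\<^sub>-\<^sub>d + t\<^sub>d\<close>.\<close>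

lemma neg_ln_act_belief_ge:
  assumes \<omega>: "supported \<omega>" and c: "0 < c" and \<epsilon>: "0 \<le> \<epsilon>" "\<epsilon> \<le> KL l Sig v th_star th"
    and floor: "true_state_floor c \<epsilon> \<omega>" and path: "(v, i) \<in> E ^^ d"
    and T: "\<And>t. T \<le> t \<Longrightarrow> real t * (KL l Sig v th_star th - \<epsilon>) \<le> llr_sum \<omega> t v th"
    and t: "trig a (d + T) \<le> t"
  shows "(KL l Sig v th_star th - \<epsilon>) * (real t - real (trig a d)) / real a ^ Suc d
           - real (Suc d) * (\<epsilon> * real t - ln c) - ln (pi0 v th / pi0 v th_star) \<le> - ln (\<mu> \<omega> t i th)"
proof -
  define K where "K = KL l Sig v th_star th"
  define A where "A = real a ^ Suc d"
  have A: "0 < A" unfolding A_def using a_ge_1 by simp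
  define R where "R = pi0 v th / pi0 v th_star"
  have R: "0 < R" unfolding R_def using pi0_pos by simp
  have "1 \<le> t" using t trig_pos[of a "d + T"] by linarith
  then obtain k where k: "trig a k \<le> t" "t < trig a (Suc k)" using trig_bracket[OF a_ge_1] by blast
  have "d + T < Suc k"
    using t k(2) strict_mono_less[OF strict_mono_trig[OF a_ge_1], of "d + T" "Suc k"] by linarith
  hence dk: "d \<le> k" and T_le: "T \<le> trig a (k - d)"
    using seq_suble[OF strict_mono_trig[OF a_ge_1], of "k - d"] by auto
  have "t < a ^ Suc d * trig a (k - d) + trig a d"
    using k(2) trig_add_Suc[of a "k - d" d] dk by (simp add: Suc_diff_le)
  hence t_less: "real t < A * real (trig a (k - d)) + real (trig a d)"
    unfolding A_def by (metis of_nat_add of_nat_less_iff of_nat_mult of_nat_power)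
  define B where "B = (exp (\<epsilon> * real t) / c) ^ Suc d * (R * exp (- ((K - \<epsilon>) * real (trig a (k - d)))))"
  have "\<pi> \<omega> (trig a (k - d)) v th \<le> R * exp (- llr_sum \<omega> (trig a (k - d)) v th)"
    using loc_belief_le[OF \<omega>] by (simp add: R_def)
  also have "\<dots> \<le> R * exp (- ((K - \<epsilon>) * real (trig a (k - d))))"
    using T[OF T_le] R by (simp add: K_def mult.commute)
  finally have "\<mu> \<omega> t i th \<le> B"
    unfolding B_def using c
    by (intro order_trans[OF act_belief_le_between_trig[OF \<omega> c \<epsilon>(1) floor path dk k]] mult_left_mono) auto
  hence "ln (\<mu> \<omega> t i th) \<le> ln B" using act_belief_pos[OF \<omega>] c R by (simp add: B_def)
  moreover have "ln B = real (Suc d) * (\<epsilon> * real t - ln c) + ln R - (K - \<epsilon>) * real (trig a (k - d))"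
    using c R by (simp add: B_def ln_mult ln_realpow ln_div algebra_simps)
  moreover have "(K - \<epsilon>) * (real t - real (trig a d)) \<le> (K - \<epsilon>) * (A * real (trig a (k - d)))"
    using t_less \<epsilon>(2) by (intro mult_left_mono) (auto simp: K_def)
  hence "(K - \<epsilon>) * (real t - real (trig a d)) / A \<le> (K - \<epsilon>) * real (trig a (k - d))"
    using A by (simp add: pos_divide_le_eq mult_ac)
  ultimately show ?thesis unfolding K_def A_def R_def by linarith
qed

lemma act_belief_log_lower_bound:
  assumes \<omega>: "supported \<omega>" and growth: "llr_growth \<omega>" and path: "(v, i) \<in> E ^^ d"
    and \<epsilon>: "0 < \<epsilon>" "\<epsilon> \<le> KL l Sig v th_star th"
  shows "\<exists>\<beta>. eventually (\<lambda>t. ((KL l Sig v th_star th - \<epsilon>) / real a ^ Suc d - real (Suc d) * \<epsilon>) * real t - \<beta>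
                             \<le> - ln (\<mu> \<omega> t i th)) sequentially"
proof -
  obtain c where c: "0 < c" and floor: "true_state_floor c \<epsilon> \<omega>"
    using exists_true_state_floor[OF \<omega> growth \<epsilon>(1)] .
  obtain T where T: "\<And>t. T \<le> t \<Longrightarrow> real t * (KL l Sig v th_star th - \<epsilon>) \<le> llr_sum \<omega> t v th"
    using growth \<epsilon>(1) unfolding llr_growth_def eventually_sequentially by blast
  define \<beta> where "\<beta> = (KL l Sig v th_star th - \<epsilon>) * real (trig a d) / real a ^ Suc d
                       - real (Suc d) * ln c + ln (pi0 v th / pi0 v th_star)"
  have "((KL l Sig v th_star th - \<epsilon>) / real a ^ Suc d - real (Suc d) * \<epsilon>) * real t - \<beta>
          \<le> - ln (\<mu> \<omega> t i th)" if "trig a (d + T) \<le> t" for t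
    using neg_ln_act_belief_ge[OF \<omega> c less_imp_le[OF \<epsilon>(1)] \<epsilon>(2) floor path T that]
    by (simp add: \<beta>_def diff_divide_distrib add_divide_distrib algebra_simps)
  thus ?thesis unfolding eventually_sequentially by blast
qed

lemma eventually_decay_rate:
  assumes \<omega>: "supported \<omega>" and growth: "llr_growth \<omega>" and path: "(v, i) \<in> E ^^ d"
    and y: "y < KL l Sig v th_star th / real a ^ Suc d"
  shows "eventually (\<lambda>t. y < - ln (\<mu> \<omega> t i th) / real t) sequentially"
proof (cases "y < 0")
  case True
  have nonneg: "0 \<le> - ln (\<mu> \<omega> t i th) / real t" for t
    using act_belief_pos[OF \<omega>] act_belief_le_1[OF \<omega>] by (simp add: divide_nonpos_nonneg)
  show ?thesis by (intro always_eventually allI less_le_trans[OF True] nonneg)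
next
  case False
  define K where "K = KL l Sig v th_star th"
  define A where "A = real a ^ Suc d"
  have A: "1 \<le> A" unfolding A_def using a_ge_1 by (intro one_le_power) simp
  have gap: "0 < K / A - y" using y by (simp add: K_def A_def)
  hence "0 < K / A" using False by linarith
  hence K: "0 < K" using A by (simp add: zero_less_divide_iff)
  define \<epsilon> where "\<epsilon> = min K ((K / A - y) / (2 * real (Suc (Suc d))))"
  have \<epsilon>: "0 < \<epsilon>" "\<epsilon> \<le> K" using K gap by (simp_all add: \<epsilon>_def)
  have "\<epsilon> \<le> (K / A - y) / (2 * real (Suc (Suc d)))" by (simp add: \<epsilon>_def)
  hence "2 * (real (Suc (Suc d)) * \<epsilon>) \<le> K / A - y" by (simp add: field_simps)
  hence "y < K / A - real (Suc (Suc d)) * \<epsilon>" using gap by linarith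
  also have "\<dots> \<le> (K - \<epsilon>) / A - real (Suc d) * \<epsilon>"
    using A \<epsilon>(1) by (simp add: diff_divide_distrib divide_le_eq algebra_simps)
  finally have y_less: "y < (K - \<epsilon>) / A - real (Suc d) * \<epsilon>" .
  obtain \<beta> where "eventually (\<lambda>t. ((K - \<epsilon>) / A - real (Suc d) * \<epsilon>) * real t - \<beta>
                                 \<le> - ln (\<mu> \<omega> t i th)) sequentially"
    using act_belief_log_lower_bound[OF \<omega> growth path \<epsilon>(1)] \<epsilon>(2) by (auto simp: K_def A_def)
  with y_less show ?thesis by (rule eventually_less_divide_of_linear_lower_bound)
qed

lemma act_belief_tendsto_0:
  assumes \<omega>: "supported \<omega>" and growth: "llr_growth \<omega>" and conn: "strongly_connected E"
    and source: "source_set l Sig th_star th \<noteq> {}"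
  shows "(\<lambda>t. \<mu> \<omega> t i th) \<longlonglongrightarrow> 0"
proof -
  obtain v where v: "v \<in> source_set l Sig th_star th" using source by blast
  define z where "z = KL l Sig v th_star th / real a ^ Suc (dist_graph E v i)"
  define y where "y = z / 2"
  have z: "0 < z" using v a_ge_1 by (simp add: z_def source_set_def)
  hence y: "0 < y" and "y < z" by (simp_all add: y_def)
  hence "eventually (\<lambda>t. y < - ln (\<mu> \<omega> t i th) / real t) sequentially"
    unfolding z_def by (intro eventually_decay_rate[OF \<omega> growth relpow_dist_graph[OF conn]])
  hence upper: "eventually (\<lambda>t. \<mu> \<omega> t i th \<le> exp (- y) ^ t) sequentially"
  proof (rule eventually_mono[OF eventually_conj[OF _ eventually_gt_at_top[of 0]]])
    fix t :: nat assume t: "y < - ln (\<mu> \<omega> t i th) / real t \<and> 0 < t"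
    hence "y * real t < - ln (\<mu> \<omega> t i th)"
      using pos_less_divide_eq[of "real t" y "- ln (\<mu> \<omega> t i th)"] by simp
    hence "ln (\<mu> \<omega> t i th) < - (real t * y)" using mult.commute[of y "real t"] by linarith
    hence "ln (\<mu> \<omega> t i th) < ln (exp (- y) ^ t)" by (simp add: ln_realpow)
    thus "\<mu> \<omega> t i th \<le> exp (- y) ^ t" using act_belief_pos[OF \<omega>] by simp
  qed
  have lim: "(\<lambda>t. exp (- y) ^ t) \<longlonglongrightarrow> 0" using y by (intro LIMSEQ_power_zero) auto
  have lower: "eventually (\<lambda>t. 0 \<le> \<mu> \<omega> t i th) sequentially"
    using act_belief_pos[OF \<omega>] by (simp add: less_imp_le)
  show ?thesis by (rule tendsto_sandwich[OF lower upper tendsto_const lim])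
qed

lemma act_belief_true_tendsto_1:
  assumes \<omega>: "supported \<omega>" and growth: "llr_growth \<omega>" and conn: "strongly_connected E"
    and ident: "\<And>th. th \<noteq> th_star \<Longrightarrow> source_set l Sig th_star th \<noteq> {}"
  shows "(\<lambda>t. \<mu> \<omega> t i th_star) \<longlonglongrightarrow> 1"
proof -
  have "\<mu> \<omega> t i th_star = 1 - (\<Sum>th\<in>UNIV - {th_star}. \<mu> \<omega> t i th)" for t
    using act_belief_pos_sum[OF \<omega>, of t] sum.remove[of UNIV th_star "\<mu> \<omega> t i"] by simp
  moreover have "(\<lambda>t. 1 - (\<Sum>th\<in>UNIV - {th_star}. \<mu> \<omega> t i th)) \<longlonglongrightarrow> 1 - (\<Sum>th\<in>UNIV - {th_star}. 0)"
    by (intro tendsto_intros act_belief_tendsto_0[OF \<omega> growth conn ident]) auto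
  ultimately show ?thesis by simp
qed

lemma liminf_decay_rate_ge:
  assumes \<omega>: "supported \<omega>" and growth: "llr_growth \<omega>" and conn: "strongly_connected E"
    and source: "source_set l Sig th_star th \<noteq> {}"
  shows "ereal (Max ((\<lambda>v. KL l Sig v th_star th / real a ^ (dist_graph E v i + 1)) ` source_set l Sig th_star th))
           \<le> liminf (\<lambda>t. ereal (- ln (\<mu> \<omega> t i th) / real t))"
proof -
  define F where "F v = KL l Sig v th_star th / real a ^ (dist_graph E v i + 1)" for v
  obtain v where "v \<in> source_set l Sig th_star th" and v: "Max (F ` source_set l Sig th_star th) = F v"
    using Max_in[of "F ` source_set l Sig th_star th"] source by fastforce
  have "eventually (\<lambda>t. z < ereal (- ln (\<mu> \<omega> t i th) / real t)) sequentially" if z: "z < ereal (F v)" for z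
  proof (cases z)
    case (real r)
    with z have "r < KL l Sig v th_star th / real a ^ Suc (dist_graph E v i)" by (simp add: F_def)
    with real show ?thesis
      using eventually_decay_rate[OF \<omega> growth relpow_dist_graph[OF conn]] by simp
  qed (use z in simp_all)
  thus ?thesis unfolding F_def[symmetric] v by (simp add: le_Liminf_iff)
qed

lemma AE_supported: "AE \<omega> in stream_space (measure_pmf (l th_star)). supported \<omega>"
proof -
  have "AE \<omega> in stream_space (measure_pmf (l th_star)). stream_all (\<lambda>s. s \<in> set_pmf (l th_star)) \<omega>"
    by (rule prob_space.AE_stream_all[OF prob_space_measure_pmf]) (simp_all add: AE_measure_pmf)
  thus ?thesis by (simp only: supported_def stream_all_def)
qed

lemma AE_llr_growth: "AE \<omega> in stream_space (measure_pmf (l th_star)). llr_growth \<omega>"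
proof -
  have "AE \<omega> in stream_space (measure_pmf (l th_star)). eventually (\<lambda>t.
          real t * (KL l Sig i th_star th - 1 / Suc m) \<le> llr_sum \<omega> t i th) sequentially" for i th m
  proof -
    have bounded: "\<bar>llr i th (s i)\<bar> \<le> (\<Sum>w\<in>Sig i. \<bar>llr i th w\<bar>)" if "s \<in> set_pmf (l th_star)" for s
      using supp[OF that] by (intro member_le_sum Sig_finite) auto
    have "AE \<omega> in stream_space (measure_pmf (l th_star)). eventually (\<lambda>t. real t *
            (measure_pmf.expectation (l th_star) (\<lambda>s. llr i th (s i)) - 1 / Suc m)
              \<le> (\<Sum>\<tau><t. llr i th ((\<omega> !! \<tau>) i))) sequentially"
      by (intro AE_eventually_partial_sum_ge[where f="\<lambda>s. llr i th (s i)" and B="\<Sum>w\<in>Sig i. \<bar>llr i th w\<bar>"]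
                bounded) simp_all
    thus ?thesis by (simp add: expectation_llr_eq_KL llr_sum_def)
  qed
  hence "AE \<omega> in stream_space (measure_pmf (l th_star)). \<forall>i th m. eventually (\<lambda>t.
           real t * (KL l Sig i th_star th - 1 / Suc m) \<le> llr_sum \<omega> t i th) sequentially"
    by (simp add: AE_all_countable)
  thus ?thesis
  proof (rule AE_mp, intro AE_I2 impI)
    fix \<omega> assume lln: "\<forall>i th m. eventually (\<lambda>t.
                         real t * (KL l Sig i th_star th - 1 / Suc m) \<le> llr_sum \<omega> t i th) sequentially"
    show "llr_growth \<omega>" unfolding llr_growth_def
    proof (intro allI impI)
      fix i th and \<epsilon> :: real assume "0 < \<epsilon>"
      then obtain m where m: "1 / Suc m < \<epsilon>" using nat_approx_posE by blast
      have le: "real t * (KL l Sig i th_star th - \<epsilon>) \<le> real t * (KL l Sig i th_star th - 1 / Suc m)" for t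
        using m by (intro mult_left_mono) auto
      have "eventually (\<lambda>t. real t * (KL l Sig i th_star th - 1 / Suc m) \<le> llr_sum \<omega> t i th) sequentially"
        using lln by blast
      thus "eventually (\<lambda>t. real t * (KL l Sig i th_star th - \<epsilon>) \<le> llr_sum \<omega> t i th) sequentially"
        by (rule eventually_mono) (rule order_trans[OF le])
    qed
  qed
qed

end

theorem theorem1:
  fixes a :: nat
    and E :: "('v::finite \<times> 'v) set"
    and l :: "'h::finite \<Rightarrow> ('v \<Rightarrow> 's) pmf"
    and Sig :: "'v \<Rightarrow> 's set"
    and th_star :: 'h
    and pi0 mu0 :: "'v \<Rightarrow> 'h \<Rightarrow> real"
  assumes a2: "a \<ge> 2"
    and Sig_fin: "\<And>i. finite (Sig i)"
    and supp: "\<And>th s i. s \<in> set_pmf (l th) \<Longrightarrow> s i \<in> Sig i"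
    and lik_pos: "\<And>i th w. w \<in> Sig i \<Longrightarrow> lik l i th w > 0"
    and pi0_prob: "\<And>i. (\<Sum>th\<in>UNIV. pi0 i th) = 1"
    and mu0_prob: "\<And>i. (\<Sum>th\<in>UNIV. mu0 i th) = 1"
    and ident: "\<And>p q. p \<noteq> q \<Longrightarrow> source_set l Sig p q \<noteq> {}"
    and conn: "strongly_connected E"
    and pi0_pos: "\<And>i th. pi0 i th > 0"
    and mu0_pos: "\<And>i th. mu0 i th > 0"
  shows "(\<forall>i. AE \<omega> in stream_space (measure_pmf (l th_star)).
            (\<lambda>t. act_belief a E l pi0 mu0 \<omega> t i th_star) \<longlonglongrightarrow> 1)
       \<and> (\<forall>i. \<forall>th. th \<noteq> th_star \<longrightarrow>
            (AE \<omega> in stream_space (measure_pmf (l th_star)).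
              liminf (\<lambda>t. ereal (- ln (act_belief a E l pi0 mu0 \<omega> t i th) / real t))
              \<ge> ereal (Max ((\<lambda>v. KL l Sig v th_star th / real a ^ (dist_graph E v i + 1))
                              ` source_set l Sig th_star th))))"
proof -
  interpret learning_rule a E l Sig th_star pi0 mu0
    using a2 by unfold_locales (simp_all add: Sig_fin supp lik_pos pi0_prob mu0_prob pi0_pos mu0_pos)
  have sources: "\<And>th. th \<noteq> th_star \<Longrightarrow> source_set l Sig th_star th \<noteq> {}"
    using ident by metis
  have typical: "AE \<omega> in stream_space (measure_pmf (l th_star)). supported \<omega> \<and> llr_growth \<omega>"
    using AE_supported AE_llr_growth by (rule AE_conjI)
  show ?thesis unfolding act_belief_def
  proof (intro conjI allI impI)
    fix i show "AE \<omega> in stream_space (measure_pmf (l th_star)). (\<lambda>t. \<mu> \<omega> t i th_star) \<longlonglongrightarrow> 1"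
      using typical by eventually_elim (elim conjE, rule act_belief_true_tendsto_1[OF _ _ conn sources])
  next
    fix i th assume "th \<noteq> th_star"
    hence source: "source_set l Sig th_star th \<noteq> {}" by (rule sources)
    from typical show "AE \<omega> in stream_space (measure_pmf (l th_star)).
        liminf (\<lambda>t. ereal (- ln (\<mu> \<omega> t i th) / real t))
          \<ge> ereal (Max ((\<lambda>v. KL l Sig v th_star th / real a ^ (dist_graph E v i + 1)) ` source_set l Sig th_star th))"
      by eventually_elim (elim conjE, rule liminf_decay_rate_ge[OF _ _ conn source])
  qed
qed

end
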